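(* Algorithm $\mathsf{EqualCellsCounter}$ (described in the context) has audit complexity $O(n^2)$: there is an auditor which, given $F$ (on $n$ variables), the estimate $C_{est}$ and the certificate $h$ output by $\mathsf{EqualCellsCounter}(F)$, makes a single query to a $\Sigma_2^P$ oracle on a quantified Boolean formula with $O(n^2)$ variables, accepts the algorithm's output, and whenever it accepts, $C_{est}$ is within a factor $16$ of $|\mathrm{Sol}(F)|$.
   Context: $\mathrm{Sol}(F)$ is the set of satisfying assignments of $F$; $\log$ is base 2. $\mathcal{H}(n,m,n)$ is a fixed explicit $n$-wise independent family of hash functions $\{0,1\}^n\to\{0,1\}^m$, each member described by polynomially many bits. For positive integers $\ell,u$, $\varphi^{\langle F,\ell,u\rangle}_{Cells}(m)$ is $\exists h\in\mathcal{H}(n,m,n)\ \forall \alpha\in\{0,1\}^m\ \forall y_1,\dots,y_{u+1}\in\{0,1\}^n\ \exists z_1,\dots,z_\ell\in\{0,1\}^n:$ $\Big(\bigwedge_{i=1}^{u+1}(F(y_i)\wedge h(y_i)=\alpha)\rightarrow\bigvee_{1\le i<j\le u+1}(y_i=y_j)\Big)\wedge\Big(\bigwedge_{i=1}^{\ell}(F(z_i)\wedge h(z_i)=\alpha)\wedge\bigwedge_{1\le i<j\le\ell}(z_i\neq z_j)\Big).$ Algorithm $\mathsf{EqualCellsCounter}(F)$: set $u=16384n$, $\ell=1024n$; for $m=1,\dots,n$ query a $\Sigma_3^P$ oracle on $\varphi^{\langle F,\ell,u\rangle}_{Cells}(m)$; at the first $m$ for which it is true, output $C_{est}=\ell\cdot2^m$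 and the witnessing $h$ as certificate. An auditor for an algorithm $A$ takes $F$, the estimate and the certificate produced by $A$, and uses an oracle to certify that the estimate lies within the claimed approximation factor of $|\mathrm{Sol}(F)|$; $A$ has audit complexity $r$ if it has an auditor making exactly one call to a $\Sigma_2^P$ oracle, on a formula with at most $r$ variables (the paper's auditor recovers $m=\lfloor\log(C_{est}/n)\rfloor-10$ and checks $\varphi^{\langle F,\ell,u\rangle}_{Cells}(m)$ with $h$ substituted by the certificate). *)

theory Defs
  imports Complex_Main
begin

datatype pform = PVar nat | PTrue | PNot pform | PAnd pform pform | POr pform pform

fun peval :: "(nat \<Rightarrow> bool) \<Rightarrow> pform \<Rightarrow> bool" where
  "peval v (PVar i) = v i"
| "peval v PTrue = True"
| "peval v (PNot f) = (\<not> peval v f)"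
| "peval v (PAnd f g) = (peval v f \<and> peval v g)"
| "peval v (POr f g) = (peval v f \<or> peval v g)"

fun pvars :: "pform \<Rightarrow> nat set" where
  "pvars (PVar i) = {i}"
| "pvars PTrue = {}"
| "pvars (PNot f) = pvars f"
| "pvars (PAnd f g) = pvars f \<union> pvars g"
| "pvars (POr f g) = pvars f \<union> pvars g"

definition formula_on :: "nat \<Rightarrow> pform \<Rightarrow> bool" where
  "formula_on n F \<longleftrightarrow> pvars F \<subseteq> {..<n}"

definition sat :: "pform \<Rightarrow> bool list \<Rightarrow> bool" where
  "sat F x \<longleftrightarrow> peval (\<lambda>i. x ! i) F"

definition Sol :: "nat \<Rightarrow> pform \<Rightarrow> bool list set" where
  "Sol n F = {x. length x = n \<and> sat F x}"

text \<open>H is a k-wise independent family of functions {0,1}^n -> {0,1}^m: a finite nonempty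
  set of functions mapping length-n lists to length-m lists such that for a uniformly random
  member h, the values at any k distinct points are independent and uniform.\<close>
definition kwise_indep_family ::
  "nat \<Rightarrow> nat \<Rightarrow> nat \<Rightarrow> (bool list \<Rightarrow> bool list) set \<Rightarrow> bool" where
  "kwise_indep_family n m k H \<longleftrightarrow>
     finite H \<and> H \<noteq> {} \<and>
     (\<forall>h\<in>H. \<forall>x. length x = n \<longrightarrow> length (h x) = m) \<and>
     (\<forall>xs as. length xs = k \<and> distinct xs \<and> (\<forall>x\<in>set xs. length x = n) \<and>
              length as = k \<and> (\<forall>a\<in>set as. length a = m) \<longrightarrow>
        card {h\<in>H. \<forall>i<k. h (xs ! i) = as ! i} * 2 ^ (m * k) = card H)"

definition hash_families :: "(nat \<Rightarrow> nat \<Rightarrow> (bool list \<Rightarrow> bool list) set) \<Rightarrow> bool" where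
  "hash_families Hfam \<longleftrightarrow> (\<forall>n m. kwise_indep_family n m n (Hfam n m))"

definition ECC_l :: "nat \<Rightarrow> nat" where "ECC_l n = 1024 * n"
definition ECC_u :: "nat \<Rightarrow> nat" where "ECC_u n = 16384 * n"

text \<open>Matrix of phi_Cells (y_1..y_(u+1) indexed 0..u, z_1..z_l indexed 0..l-1).\<close>
definition cells_matrix ::
  "pform \<Rightarrow> nat \<Rightarrow> nat \<Rightarrow> (bool list \<Rightarrow> bool list) \<Rightarrow> bool list
    \<Rightarrow> (nat \<Rightarrow> bool list) \<Rightarrow> (nat \<Rightarrow> bool list) \<Rightarrow> bool" where
  "cells_matrix F l u h \<alpha> y z \<longleftrightarrow>
     ((\<forall>i\<le>u. sat F (y i) \<and> h (y i) = \<alpha>) \<longrightarrow> (\<exists>i j. i < j \<and> j \<le> u \<and> y i = y j)) \<and>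
     ((\<forall>i<l. sat F (z i) \<and> h (z i) = \<alpha>) \<and> (\<forall>i j. i < j \<and> j < l \<longrightarrow> z i \<noteq> z j))"

definition cells_body ::
  "nat \<Rightarrow> pform \<Rightarrow> nat \<Rightarrow> nat \<Rightarrow> nat \<Rightarrow> (bool list \<Rightarrow> bool list) \<Rightarrow> bool" where
  "cells_body n F l u m h \<longleftrightarrow>
     (\<forall>\<alpha>. length \<alpha> = m \<longrightarrow>
       (\<forall>ys. length ys = u + 1 \<and> (\<forall>y\<in>set ys. length y = n) \<longrightarrow>
         (\<exists>zs. length zs = l \<and> (\<forall>z\<in>set zs. length z = n) \<and>
            cells_matrix F l u h \<alpha> (\<lambda>i. ys ! i) (\<lambda>i. zs ! i))))"

definition phi_cells ::
  "(nat \<Rightarrow> nat \<Rightarrow> (bool list \<Rightarrow> bool list) set) \<Rightarrow> nat \<Rightarrow> pform \<Rightarrow> nat \<Rightarrow> nat \<Rightarrow> nat \<Rightarrow> bool" where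
  "phi_cells Hfam n F l u m \<longleftrightarrow> (\<exists>h\<in>Hfam n m. cells_body n F l u m h)"

text \<open>(C, h) is a possible output of EqualCellsCounter(F): m is the first value in 1..n for
  which the Sigma_3 oracle answers true, C = l * 2^m and h is a witnessing hash function.\<close>
definition ECC_output ::
  "(nat \<Rightarrow> nat \<Rightarrow> (bool list \<Rightarrow> bool list) set) \<Rightarrow> nat \<Rightarrow> pform \<Rightarrow> nat
    \<Rightarrow> (bool list \<Rightarrow> bool list) \<Rightarrow> bool" where
  "ECC_output Hfam n F C h \<longleftrightarrow>
     (\<exists>m. 1 \<le> m \<and> m \<le> n \<and>
          (\<forall>m'. 1 \<le> m' \<and> m' < m \<longrightarrow> \<not> phi_cells Hfam n F (ECC_l n) (ECC_u n) m') \<and>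
          phi_cells Hfam n F (ECC_l n) (ECC_u n) m \<and>
          C = ECC_l n * 2 ^ m \<and> h \<in> Hfam n m \<and> cells_body n F (ECC_l n) (ECC_u n) m h)"

datatype sigma2 = Sigma2 nat nat "bool list \<Rightarrow> bool list \<Rightarrow> bool"

fun s2_nvars :: "sigma2 \<Rightarrow> nat" where
  "s2_nvars (Sigma2 a b M) = a + b"

fun s2_true :: "sigma2 \<Rightarrow> bool" where
  "s2_true (Sigma2 a b M) =
     (\<forall>xs. length xs = a \<longrightarrow> (\<exists>ys. length ys = b \<and> M xs ys))"

definition chunk :: "nat \<Rightarrow> bool list \<Rightarrow> nat \<Rightarrow> bool list" where
  "chunk n xs i = take n (drop (i * n) xs)"

definition audit_mi :: "nat \<Rightarrow> nat \<Rightarrow> int" where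
  "audit_mi n C = \<lfloor>log 2 (real C / real n)\<rfloor> - 10"

definition audit_m :: "nat \<Rightarrow> nat \<Rightarrow> nat" where
  "audit_m n C = nat (min (int n) (audit_mi n C))"

text \<open>The single Sigma_2 query: phi_Cells(m) with h substituted by the certificate; universal
  variables alpha (m bits), y_1..y_(u+1) (n bits each); existential z_1..z_l (n bits each).\<close>
definition audit_query ::
  "nat \<Rightarrow> pform \<Rightarrow> nat \<Rightarrow> (bool list \<Rightarrow> bool list) \<Rightarrow> sigma2" where
  "audit_query n F C h =
     (let m = audit_m n C; l = ECC_l n; u = ECC_u n in
      Sigma2 (m + (u + 1) * n) (l * n)
        (\<lambda>xs zs. cells_matrix F l u h (take m xs) (chunk n (drop m xs)) (chunk n zs)))"

definition audit_accepts ::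
  "(nat \<Rightarrow> nat \<Rightarrow> (bool list \<Rightarrow> bool list) set) \<Rightarrow> nat \<Rightarrow> pform \<Rightarrow> nat
    \<Rightarrow> (bool list \<Rightarrow> bool list) \<Rightarrow> bool" where
  "audit_accepts Hfam n F C h \<longleftrightarrow>
     0 < C \<and> 0 \<le> audit_mi n C \<and> audit_mi n C \<le> int n \<and>
     h \<in> Hfam n (nat (audit_mi n C)) \<and> s2_true (audit_query n F C h)"

end

theory Submission imports Defs begin

text \<open>
  With h fixed, a true answer to the query says that every cell
  {x \<in> Sol(F). h x = \<alpha>}, for \<alpha> \<in> {0,1}^m, has between l and u = 16 l elements.
  As h maps {0,1}^n into {0,1}^m, these 2^m cells partition Sol(F), so
  2^m l \<le> |Sol(F)| \<le> 16 * 2^m l. The auditor reads m off C as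
  floor(log(C/n)) - 10, which is exact for the algorithm's output C = 1024 n 2^m
  and in general places C within a factor 2 above 2^m l. The query has
  m + (u + 1) n + l n = O(n^2) variables.
\<close>

lemma length_concat_const:
  "\<forall>y\<in>set ys. length y = n \<Longrightarrow> length (concat ys) = length ys * n"
  by (induction ys) auto

lemma length_chunk: "(i + 1) * n \<le> length xs \<Longrightarrow> length (chunk n xs i) = n"
  by (simp add: chunk_def)

lemma chunk_concat:
  "\<forall>y\<in>set ys. length y = n \<Longrightarrow> i < length ys \<Longrightarrow> chunk n (concat ys) i = ys ! i"
proof (induction ys arbitrary: i)
  case Nil
  then show ?case by simp
next
  case (Cons y ys)
  then show ?case
    by (cases i) (simp_all add: chunk_def add.commute)
qed

lemma length_of_mem_chunks:
  assumes "length xs = k * n" "y \<in> set (map (chunk n xs) [0..<k])"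
  shows "length y = n"
proof -
  obtain i where "i < k" "y = chunk n xs i"
    using assms(2) by auto
  moreover have "(i + 1) * n \<le> length xs"
    using \<open>i < k\<close> assms(1) mult_le_mono1[of "i + 1" k n] by simp
  ultimately show ?thesis
    by (simp add: length_chunk)
qed

lemma cells_matrix_cong:
  assumes "\<And>i. i \<le> u \<Longrightarrow> y i = y' i" "\<And>i. i < l \<Longrightarrow> z i = z' i"
  shows "cells_matrix F l u h \<alpha> y z = cells_matrix F l u h \<alpha> y' z'"
proof -
  have "(\<exists>i j. i < j \<and> j \<le> u \<and> y i = y j) = (\<exists>i j. i < j \<and> j \<le> u \<and> y' i = y' j)"
    using assms(1) by (metis less_imp_le order.trans)
  moreover have "(\<forall>i j. i < j \<and> j < l \<longrightarrow> z i \<noteq> z j) = (\<forall>i j. i < j \<and> j < l \<longrightarrow> z' i \<noteq> z' j)"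
    using assms(2) by (metis order.strict_trans)
  ultimately show ?thesis
    unfolding cells_matrix_def using assms by auto
qed

lemma cells_body_if_s2_true_cells_query:
  assumes query: "s2_true (Sigma2 (m + (u + 1) * n) (l * n)
      (\<lambda>xs zs. cells_matrix F l u h (take m xs) (chunk n (drop m xs)) (chunk n zs)))"
  shows "cells_body n F l u m h"
  unfolding cells_body_def
proof (intro allI impI, elim conjE)
  fix \<alpha> :: "bool list" and ys :: "bool list list"
  assume "length \<alpha> = m" and ys: "length ys = u + 1" "\<forall>y\<in>set ys. length y = n"
  then have "length (\<alpha> @ concat ys) = m + (u + 1) * n"
    using length_concat_const[OF ys(2)] by simp
  then obtain zs' where zs': "length zs' = l * n"
    "cells_matrix F l u h \<alpha> (chunk n (concat ys)) (chunk n zs')"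
    using query \<open>length \<alpha> = m\<close> unfolding s2_true.simps
    by (metis append_eq_conv_conj)
  define zs where "zs = map (chunk n zs') [0..<l]"
  have "cells_matrix F l u h \<alpha> (\<lambda>i. ys ! i) (\<lambda>i. zs ! i)"
    using zs'(2) ys
    by (subst cells_matrix_cong[where y' = "chunk n (concat ys)" and z' = "chunk n zs'"])
      (auto simp: chunk_concat zs_def simp del: upt_Suc)
  moreover have "length zs = l" "\<forall>z\<in>set zs. length z = n"
    using length_of_mem_chunks[OF zs'(1)] by (auto simp: zs_def)
  ultimately show "\<exists>zs. length zs = l \<and> (\<forall>z\<in>set zs. length z = n) \<and>
      cells_matrix F l u h \<alpha> (\<lambda>i. ys ! i) (\<lambda>i. zs ! i)"
    by blast
qed

lemma s2_true_cells_query_if_cells_body: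
  assumes body: "cells_body n F l u m h"
  shows "s2_true (Sigma2 (m + (u + 1) * n) (l * n)
      (\<lambda>xs zs. cells_matrix F l u h (take m xs) (chunk n (drop m xs)) (chunk n zs)))"
  unfolding s2_true.simps
proof (intro allI impI)
  fix xs :: "bool list"
  assume xs: "length xs = m + (u + 1) * n"
  define ys where "ys = map (chunk n (drop m xs)) [0..<u + 1]"
  have "length ys = u + 1" "\<forall>y\<in>set ys. length y = n"
    using length_of_mem_chunks[of "drop m xs" "u + 1" n] xs by (auto simp: ys_def simp del: upt_Suc)
  moreover have "length (take m xs) = m"
    using xs by simp
  ultimately obtain zs where zs: "length zs = l" "\<forall>z\<in>set zs. length z = n"
    "cells_matrix F l u h (take m xs) (\<lambda>i. ys ! i) (\<lambda>i. zs ! i)"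
    using body unfolding cells_body_def by blast
  have "cells_matrix F l u h (take m xs) (chunk n (drop m xs)) (chunk n (concat zs))"
    using zs
    by (subst cells_matrix_cong[where y' = "\<lambda>i. ys ! i" and z' = "\<lambda>i. zs ! i"])
      (auto simp: ys_def chunk_concat simp del: upt_Suc)
  moreover have "length (concat zs) = l * n"
    using zs(1) length_concat_const[OF zs(2)] by simp
  ultimately show "\<exists>zs. length zs = l * n \<and>
      cells_matrix F l u h (take m xs) (chunk n (drop m xs)) (chunk n zs)"
    by blast
qed

lemma s2_true_audit_query_iff:
  "s2_true (audit_query n F C h) \<longleftrightarrow> cells_body n F (ECC_l n) (ECC_u n) (audit_m n C) h"
  unfolding audit_query_def Let_def
  using cells_body_if_s2_true_cells_query s2_true_cells_query_if_cells_body by blast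

lemma finite_bool_lists_length: "finite {xs :: bool list. length xs = n}"
  using finite_lists_length_eq[of "UNIV :: bool set" n] by simp

lemma finite_Sol: "finite (Sol n F)"
  by (rule finite_subset[OF _ finite_bool_lists_length[of n]]) (auto simp: Sol_def)

lemma cells_body_card_cell_le:
  assumes body: "cells_body n F l u m h" and "length \<alpha> = m"
  shows "card {x \<in> Sol n F. h x = \<alpha>} \<le> u"
proof (rule ccontr)
  define cell where "cell = {x \<in> Sol n F. h x = \<alpha>}"
  assume "\<not> card {x \<in> Sol n F. h x = \<alpha>} \<le> u"
  then have "u + 1 \<le> card cell"
    by (simp add: cell_def)
  then obtain T where T: "T \<subseteq> cell" "card T = u + 1"
    by (rule obtain_subset_with_card_n)
  then have "finite T"
    by (intro card_ge_0_finite) simp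
  then obtain ys where ys: "set ys = T" "distinct ys"
    using finite_distinct_list by blast
  then have len: "length ys = u + 1"
    using T(2) distinct_card by fastforce
  have "\<forall>y\<in>set ys. length y = n"
    using ys(1) T(1) by (auto simp: cell_def Sol_def)
  then obtain zs where "cells_matrix F l u h \<alpha> (\<lambda>i. ys ! i) (\<lambda>i. zs ! i)"
    using body \<open>length \<alpha> = m\<close> len unfolding cells_body_def by blast
  moreover have "\<forall>i\<le>u. sat F (ys ! i) \<and> h (ys ! i) = \<alpha>"
    using ys(1) T(1) len by (auto simp: cell_def Sol_def)
  ultimately obtain i j where "i < j" "j \<le> u" "ys ! i = ys ! j"
    unfolding cells_matrix_def by blast
  then show False
    using ys(2) len nth_eq_iff_index_eq by fastforce
qed

lemma cells_body_card_cell_ge: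
  assumes body: "cells_body n F l u m h" and "length \<alpha> = m"
  shows "l \<le> card {x \<in> Sol n F. h x = \<alpha>}"
proof -
  let ?ys = "replicate (u + 1) (replicate n False)"
  have "length ?ys = u + 1" "\<forall>y\<in>set ?ys. length y = n"
    by simp_all
  then obtain zs where zs: "length zs = l" "\<forall>z\<in>set zs. length z = n"
    "cells_matrix F l u h \<alpha> (\<lambda>i. ?ys ! i) (\<lambda>i. zs ! i)"
    using body \<open>length \<alpha> = m\<close> unfolding cells_body_def by blast
  then have in_cell: "\<forall>i<l. sat F (zs ! i) \<and> h (zs ! i) = \<alpha>"
    and pairwise_distinct: "\<forall>i j. i < j \<and> j < l \<longrightarrow> zs ! i \<noteq> zs ! j"
    unfolding cells_matrix_def by blast+
  have "set zs \<subseteq> {x \<in> Sol n F. h x = \<alpha>}"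
    using zs(1,2) in_cell by (auto simp: Sol_def in_set_conv_nth)
  moreover have "distinct zs"
    unfolding distinct_conv_nth using zs(1) pairwise_distinct by (metis nat_neq_iff)
  ultimately have "card (set zs) \<le> card {x \<in> Sol n F. h x = \<alpha>}"
    by (intro card_mono) (auto intro: finite_subset[OF _ finite_Sol])
  then show ?thesis
    using \<open>distinct zs\<close> zs(1) distinct_card by metis
qed

lemma card_bounds_from_fibres:
  fixes f :: "'a \<Rightarrow> bool list"
  assumes "finite S" "\<forall>x\<in>S. length (f x) = m"
    and fibre: "\<And>\<alpha>. length \<alpha> = m \<Longrightarrow> l \<le> card {x \<in> S. f x = \<alpha>} \<and> card {x \<in> S. f x = \<alpha>} \<le> u"
  shows "2 ^ m * l \<le> card S" "card S \<le> 2 ^ m * u"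
proof -
  let ?A = "{\<alpha> :: bool list. length \<alpha> = m}"
  have "(\<Sum>\<alpha>\<in>?A. \<Sum>x\<in>{x \<in> S. f x = \<alpha>}. 1) = (\<Sum>x\<in>S. 1 :: nat)"
    by (rule sum.group) (use assms(1,2) finite_bool_lists_length in auto)
  then have card_S: "card S = (\<Sum>\<alpha>\<in>?A. card {x \<in> S. f x = \<alpha>})"
    by simp
  have card_A: "card ?A = 2 ^ m"
    using card_lists_length_eq[of "UNIV :: bool set" m] by simp
  have "card ?A * l \<le> (\<Sum>\<alpha>\<in>?A. card {x \<in> S. f x = \<alpha>})"
    using sum_bounded_below[of ?A l] fibre by simp
  moreover have "(\<Sum>\<alpha>\<in>?A. card {x \<in> S. f x = \<alpha>}) \<le> card ?A * u"
    using sum_bounded_above[of ?A _ u] fibre by simp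
  ultimately show "2 ^ m * l \<le> card S" "card S \<le> 2 ^ m * u"
    unfolding card_S card_A by simp_all
qed

lemma cells_body_card_Sol_bounds:
  assumes body: "cells_body n F l u m h" and "\<forall>x. length x = n \<longrightarrow> length (h x) = m"
  shows "2 ^ m * l \<le> card (Sol n F)" "card (Sol n F) \<le> 2 ^ m * u"
proof -
  have "\<forall>x\<in>Sol n F. length (h x) = m"
    using assms(2) by (simp add: Sol_def)
  moreover have "\<And>\<alpha>. length \<alpha> = m \<Longrightarrow>
      l \<le> card {x \<in> Sol n F. h x = \<alpha>} \<and> card {x \<in> Sol n F. h x = \<alpha>} \<le> u"
    using cells_body_card_cell_ge[OF body] cells_body_card_cell_le[OF body] by blast
  ultimately show "2 ^ m * l \<le> card (Sol n F)" "card (Sol n F) \<le> 2 ^ m * u"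
    using card_bounds_from_fibres[OF finite_Sol] by blast+
qed

lemma audit_query_nvars_le: "s2_nvars (audit_query n F C h) \<le> 17410 * n\<^sup>2"
proof -
  have "s2_nvars (audit_query n F C h) = audit_m n C + n + 17408 * n\<^sup>2"
    by (simp add: audit_query_def Let_def ECC_l_def ECC_u_def power2_eq_square algebra_simps)
  moreover have "audit_m n C \<le> n" "n \<le> n\<^sup>2"
    by (simp_all add: audit_m_def power2_eq_square)
  ultimately show ?thesis
    by linarith
qed

lemma hash_families_length:
  "hash_families Hfam \<Longrightarrow> h \<in> Hfam n m \<Longrightarrow> length x = n \<Longrightarrow> length (h x) = m"
  unfolding hash_families_def kwise_indep_family_def by blast

lemma audit_mi_ECC_estimate: "1 \<le> n \<Longrightarrow> audit_mi n (ECC_l n * 2 ^ m) = int m"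
proof -
  assume "1 \<le> n"
  then have "real (ECC_l n * 2 ^ m) / real n = 2 ^ (m + 10)"
    by (simp add: ECC_l_def power_add)
  then have "log 2 (real (ECC_l n * 2 ^ m) / real n) = real (m + 10)"
    by simp
  then show ?thesis
    by (simp add: audit_mi_def)
qed

lemma audit_mi_bounds:
  assumes "1 \<le> n" "0 < C" "audit_mi n C = int k"
  shows "2 ^ k * (1024 * real n) \<le> real C" "real C < 2 ^ k * (2048 * real n)"
proof -
  have "\<lfloor>log 2 (real C / real n)\<rfloor> = int (k + 10)"
    using assms(3) by (simp add: audit_mi_def)
  then have "2 powr (k + 10) \<le> real C / real n \<and> real C / real n < 2 powr (k + 11)"
    using floor_log_eq_powr_iff[of "real C / real n" 2] assms(1,2) by (simp add: add.commute)
  moreover have "2 powr (k + 10) = 2 ^ (k + 10)" "2 powr (k + 11) = 2 ^ (k + 11)"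
    by (simp_all only: powr_realpow of_nat_add[symmetric] zero_less_numeral)
  ultimately have "2 ^ (k + 10) \<le> real C / real n" "real C / real n < 2 ^ (k + 11)"
    by simp_all
  then show "2 ^ k * (1024 * real n) \<le> real C" "real C < 2 ^ k * (2048 * real n)"
    using assms(1) by (simp_all add: power_add field_simps)
qed

lemma ECC_output_imp_audit_accepts:
  assumes "1 \<le> n" "ECC_output Hfam n F C h"
  shows "audit_accepts Hfam n F C h"
proof -
  obtain m where m: "1 \<le> m" "m \<le> n" "C = ECC_l n * 2 ^ m" "h \<in> Hfam n m"
    "cells_body n F (ECC_l n) (ECC_u n) m h"
    using assms(2) unfolding ECC_output_def by blast
  have "audit_mi n C = int m"
    using audit_mi_ECC_estimate[OF assms(1)] m(3) by simp
  moreover have "0 < C"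
    using assms(1) m(3) by (simp add: ECC_l_def)
  ultimately show ?thesis
    using m s2_true_audit_query_iff unfolding audit_accepts_def audit_m_def by simp
qed

lemma audit_accepts_imp_card_Sol_approx:
  assumes "hash_families Hfam" "1 \<le> n" "audit_accepts Hfam n F C h"
  shows "real (card (Sol n F)) / 16 \<le> real C" "real C \<le> 16 * real (card (Sol n F))"
proof -
  define k where "k = nat (audit_mi n C)"
  have "0 < C" "audit_mi n C = int k" "k \<le> n" "h \<in> Hfam n k" "s2_true (audit_query n F C h)"
    using assms(3) unfolding audit_accepts_def k_def by auto
  then have "cells_body n F (ECC_l n) (ECC_u n) k h"
    using s2_true_audit_query_iff by (simp add: audit_m_def)
  then have "2 ^ k * ECC_l n \<le> card (Sol n F)" "card (Sol n F) \<le> 2 ^ k * ECC_u n"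
    using cells_body_card_Sol_bounds hash_families_length[OF assms(1) \<open>h \<in> Hfam n k\<close>] by blast+
  then have "real (2 ^ k * (1024 * n)) \<le> real (card (Sol n F))"
    "real (card (Sol n F)) \<le> real (2 ^ k * (16384 * n))"
    unfolding ECC_l_def ECC_u_def of_nat_le_iff .
  then have "2 ^ k * (1024 * real n) \<le> real (card (Sol n F))"
    "real (card (Sol n F)) \<le> 16 * (2 ^ k * (1024 * real n))"
    by simp_all
  then show "real (card (Sol n F)) / 16 \<le> real C" "real C \<le> 16 * real (card (Sol n F))"
    using audit_mi_bounds[OF assms(2) \<open>0 < C\<close> \<open>audit_mi n C = int k\<close>] by simp_all
qed

theorem corollary4p3:
  fixes Hfam :: "nat \<Rightarrow> nat \<Rightarrow> (bool list \<Rightarrow> bool list) set"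
  assumes "hash_families Hfam"
  shows "\<exists>c::nat. \<forall>n F C h. 1 \<le> n \<longrightarrow> formula_on n F \<longrightarrow>
           s2_nvars (audit_query n F C h) \<le> c * n ^ 2 \<and>
           (ECC_output Hfam n F C h \<longrightarrow> audit_accepts Hfam n F C h) \<and>
           (audit_accepts Hfam n F C h \<longrightarrow>
              real (card (Sol n F)) / 16 \<le> real C \<and> real C \<le> 16 * real (card (Sol n F)))"
  using audit_query_nvars_le ECC_output_imp_audit_accepts audit_accepts_imp_card_Sol_approx[OF assms] by blast

end
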